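(* Let $\sigma$ be a prime 2-structure and let $X\subsetneq V(\sigma)$ be such that $\sigma[X]$ is prime; write $\overline{X}=V(\sigma)\setminus X$. Suppose that $q^a_{(\sigma,\overline{X})}\neq\emptyset$. If $\overline{X}$ is finite and $|\overline{X}|\geq 4$, then there exist distinct $v,w\in\overline{X}$ such that $\sigma-\{v,w\}$ is prime.
   Context: A 2-structure $\sigma$ consists of a vertex set $V(\sigma)$ and an equivalence relation $\equiv_\sigma$ on ordered pairs of distinct vertices; $E(\sigma)$ is its set of equivalence classes. $\sigma[W]$ is the induced 2-structure on $W$; $\sigma-W=\sigma[V(\sigma)\setminus W]$. A module is a set $M$ such that for all $x,y\in M$ and $v\notin M$, $(x,v)\equiv_\sigma(y,v)$ and $(v,x)\equiv_\sigma(v,y)$; $\emptyset$, $V(\sigma)$, singletons are trivial; $\sigma$ is prime if $|V(\sigma)|\geq3$ and all modules are trivial. For $X$ with $\sigma[X]$ prime: $\langle X\rangle_\sigma$ is the set of $v\in\overline{X}$ such that $X$ is a module of $\sigma[X\cup\{v\}]$; for $\alpha\in X$, $X_\sigma(\alpha)$ is the set of $v\in\overline{X}$ such that $\{\alpha,v\}$ is a module of $\sigma[X\cup\{v\}]$. For $e,f\in E(\sigma)$: $\langle X\rangle^{(e,f)}_\sigma$ is the set of $v\in\langle X\rangle_\sigma$ with $(v,\alpha)\in e$ and $(\alpha,v)\in f$ for $\alpha\in X$ (independent of $\alpha$); $X^{(e,f)}_\sigma(\alpha)$ is the set of $v\in X_\sigma(\alpha)$ with $(v,\alpha)\in e$ and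 $(\alpha,v)\in f$. $q^a_{(\sigma,\overline{X})}$ is the set of nonempty sets of the form $\langle X\rangle^{(e,f)}_\sigma$ or $X^{(e,f)}_\sigma(\alpha)$ ($\alpha\in X$) with $e\neq f$. *)

theory Defs
  imports Main
begin

type_synonym 'a two_structure = "'a set \<times> (('a \<times> 'a) \<times> ('a \<times> 'a)) set"

definition dpairs :: "'a set \<Rightarrow> ('a \<times> 'a) set" where
  "dpairs V = {(x, y). x \<in> V \<and> y \<in> V \<and> x \<noteq> y}"

definition verts :: "'a two_structure \<Rightarrow> 'a set" where
  "verts \<sigma> = fst \<sigma>"

definition eqv :: "'a two_structure \<Rightarrow> (('a \<times> 'a) \<times> ('a \<times> 'a)) set" where
  "eqv \<sigma> = snd \<sigma>"

definition is_two_structure :: "'a two_structure \<Rightarrow> bool" where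
  "is_two_structure \<sigma> \<longleftrightarrow> equiv (dpairs (verts \<sigma>)) (eqv \<sigma>)"

definition classes :: "'a two_structure \<Rightarrow> ('a \<times> 'a) set set" where
  "classes \<sigma> = dpairs (verts \<sigma>) // eqv \<sigma>"

definition induced :: "'a two_structure \<Rightarrow> 'a set \<Rightarrow> 'a two_structure" where
  "induced \<sigma> W = (W, eqv \<sigma> \<inter> (dpairs W \<times> dpairs W))"

definition remove :: "'a two_structure \<Rightarrow> 'a set \<Rightarrow> 'a two_structure" where
  "remove \<sigma> W = induced \<sigma> (verts \<sigma> - W)"

definition is_module :: "'a two_structure \<Rightarrow> 'a set \<Rightarrow> bool" where
  "is_module \<sigma> M \<longleftrightarrow> M \<subseteq> verts \<sigma> \<and>
     (\<forall>x\<in>M. \<forall>y\<in>M. \<forall>v\<in>verts \<sigma> - M.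
        ((x, v), (y, v)) \<in> eqv \<sigma> \<and> ((v, x), (v, y)) \<in> eqv \<sigma>)"

definition trivial_module :: "'a two_structure \<Rightarrow> 'a set \<Rightarrow> bool" where
  "trivial_module \<sigma> M \<longleftrightarrow> M = {} \<or> M = verts \<sigma> \<or> (\<exists>x. M = {x})"

definition prime_ts :: "'a two_structure \<Rightarrow> bool" where
  "prime_ts \<sigma> \<longleftrightarrow> (infinite (verts \<sigma>) \<or> 3 \<le> card (verts \<sigma>)) \<and>
     (\<forall>M. is_module \<sigma> M \<longrightarrow> trivial_module \<sigma> M)"

definition ext_set :: "'a two_structure \<Rightarrow> 'a set \<Rightarrow> 'a set" where
  "ext_set \<sigma> X = {v \<in> verts \<sigma> - X. is_module (induced \<sigma> (X \<union> {v})) X}"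

definition ext_alpha :: "'a two_structure \<Rightarrow> 'a set \<Rightarrow> 'a \<Rightarrow> 'a set" where
  "ext_alpha \<sigma> X \<alpha> = {v \<in> verts \<sigma> - X. is_module (induced \<sigma> (X \<union> {v})) {\<alpha>, v}}"

definition ext_set_ef :: "'a two_structure \<Rightarrow> 'a set \<Rightarrow> ('a \<times> 'a) set \<Rightarrow> ('a \<times> 'a) set \<Rightarrow> 'a set" where
  "ext_set_ef \<sigma> X e f = {v \<in> ext_set \<sigma> X. \<forall>\<alpha>\<in>X. (v, \<alpha>) \<in> e \<and> (\<alpha>, v) \<in> f}"

definition ext_alpha_ef :: "'a two_structure \<Rightarrow> 'a set \<Rightarrow> 'a \<Rightarrow> ('a \<times> 'a) set \<Rightarrow> ('a \<times> 'a) set \<Rightarrow> 'a set" where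
  "ext_alpha_ef \<sigma> X \<alpha> e f = {v \<in> ext_alpha \<sigma> X \<alpha>. (v, \<alpha>) \<in> e \<and> (\<alpha>, v) \<in> f}"

definition qa :: "'a two_structure \<Rightarrow> 'a set \<Rightarrow> 'a set set" where
  "qa \<sigma> X = {S. S \<noteq> {} \<and> (\<exists>e\<in>classes \<sigma>. \<exists>f\<in>classes \<sigma>. e \<noteq> f \<and>
      (S = ext_set_ef \<sigma> X e f \<or> (\<exists>\<alpha>\<in>X. S = ext_alpha_ef \<sigma> X \<alpha> e f)))}"

end

theory Submission
  imports Defs
begin

text \<open>If |V - X| is even, the Ehrenfeucht--Rozenberg theorem (a prime Z inside the prime V with
  |V - Z| \<ge> 2 extends to a prime Z \<union> {v, w}) can be applied until two vertices remain, and removing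
  them leaves a prime set. If |V - X| is odd, the same works from X \<union> {u} or X \<union> {p, q, z} whenever
  one of them is prime. Otherwise every outside vertex lies in \<langle>X\<rangle> or in some X(\<alpha>), and the pairs
  {p, q} with X \<union> {p, q} prime form a graph on V - X without isolated vertices in which distinct
  vertices have distinct neighbourhoods. A vertex s of q^a makes the neighbourhoods of the vertices
  that X cannot tell apart from s a chain under inclusion; the one with the smallest neighbourhood
  has a single neighbour c, and removing it together with c leaves a prime set.\<close>

locale two_struct =
  fixes V :: "'a set" and E :: "(('a \<times> 'a) \<times> ('a \<times> 'a)) set"
  assumes equiv_E: "equiv (dpairs V) E"
begin

definition separates :: "'a \<Rightarrow> 'a \<Rightarrow> 'a \<Rightarrow> bool" where
  "separates u a b \<longleftrightarrow> E `` {(u, a)} \<noteq> E `` {(u, b)} \<or> E `` {(a, u)} \<noteq> E `` {(b, u)}"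

lemma not_separates_refl: "\<not> separates u a a"
  unfolding separates_def by simp

lemma not_separates_sym: "\<not> separates u a b \<Longrightarrow> \<not> separates u b a"
  unfolding separates_def by simp

lemma not_separates_trans: "\<not> separates u a b \<Longrightarrow> \<not> separates u b c \<Longrightarrow> \<not> separates u a c"
  unfolding separates_def by simp

lemma not_separates_iff:
  assumes "x \<in> V" "y \<in> V" "v \<in> V" "v \<noteq> x" "v \<noteq> y"
  shows "\<not> separates v x y \<longleftrightarrow> ((x, v), (y, v)) \<in> E \<and> ((v, x), (v, y)) \<in> E"
proof -
  have "(x, v) \<in> dpairs V" "(y, v) \<in> dpairs V" "(v, x) \<in> dpairs V" "(v, y) \<in> dpairs V"
    using assms unfolding dpairs_def by auto
  then show ?thesis
    unfolding separates_def using eq_equiv_class_iff[OF equiv_E] by blast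
qed

definition is_mod :: "'a set \<Rightarrow> 'a set \<Rightarrow> bool" where
  "is_mod W M \<longleftrightarrow> M \<subseteq> W \<and> (\<forall>a\<in>M. \<forall>b\<in>M. \<forall>u\<in>W - M. \<not> separates u a b)"

definition large :: "'a set \<Rightarrow> bool" where
  "large W \<longleftrightarrow> infinite W \<or> 3 \<le> card W"

definition prime_set :: "'a set \<Rightarrow> bool" where
  "prime_set W \<longleftrightarrow> large W \<and> (\<forall>M. is_mod W M \<longrightarrow> M = {} \<or> M = W \<or> (\<exists>x. M = {x}))"

lemma is_modI:
  "M \<subseteq> W \<Longrightarrow> (\<And>a b u. a \<in> M \<Longrightarrow> b \<in> M \<Longrightarrow> u \<in> W \<Longrightarrow> u \<notin> M \<Longrightarrow> \<not> separates u a b)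
    \<Longrightarrow> is_mod W M"
  unfolding is_mod_def by blast

lemma is_modD: "is_mod W M \<Longrightarrow> a \<in> M \<Longrightarrow> b \<in> M \<Longrightarrow> u \<in> W \<Longrightarrow> u \<notin> M \<Longrightarrow> \<not> separates u a b"
  unfolding is_mod_def by blast

lemma is_mod_subset: "is_mod W M \<Longrightarrow> M \<subseteq> W"
  unfolding is_mod_def by blast

lemma is_modI_pivot:
  assumes "M \<subseteq> W" "p \<in> M" "\<And>a u. a \<in> M \<Longrightarrow> u \<in> W \<Longrightarrow> u \<notin> M \<Longrightarrow> \<not> separates u p a"
  shows "is_mod W M"
proof (rule is_modI)
  fix a b u assume "a \<in> M" "b \<in> M" "u \<in> W" "u \<notin> M"
  then have "\<not> separates u p a" "\<not> separates u p b" using assms(3) by auto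
  then show "\<not> separates u a b" using not_separates_sym not_separates_trans by blast
qed (use assms in auto)

lemma is_mod_restrict: "is_mod W M \<Longrightarrow> W' \<subseteq> W \<Longrightarrow> is_mod W' (M \<inter> W')"
  unfolding is_mod_def by blast

lemma large_mono: "large Z \<Longrightarrow> Z \<subseteq> W \<Longrightarrow> large W"
  unfolding large_def by (meson card_mono le_trans rev_finite_subset)

lemma large_third: assumes "large W" shows "\<exists>c\<in>W. c \<noteq> a \<and> c \<noteq> b"
proof (rule ccontr)
  assume "\<not> ?thesis"
  then have "W \<subseteq> {a, b}" by blast
  then have "finite W" "card W \<le> 2"
    using finite_subset card_mono[of "{a, b}" W] card_insert_le[of "{b}" a]
    by (auto simp: card_insert_if split: if_splits)
  then show False using assms unfolding large_def by auto
qed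

lemma large_obtain_two: assumes "large W" obtains a b where "a \<in> W" "b \<in> W" "a \<noteq> b"
  using large_third[OF assms] by metis

lemma prime_set_large: "prime_set W \<Longrightarrow> large W"
  unfolding prime_set_def by blast

lemma prime_setI:
  "large W \<Longrightarrow> (\<And>M. is_mod W M \<Longrightarrow> M = {} \<or> M = W \<or> (\<exists>x. M = {x})) \<Longrightarrow> prime_set W"
  unfolding prime_set_def by blast

lemma prime_set_mod_trivial: "prime_set W \<Longrightarrow> is_mod W M \<Longrightarrow> M = {} \<or> M = W \<or> (\<exists>x. M = {x})"
  unfolding prime_set_def by blast

lemma nontrivial_mod_not_prime_set:
  "is_mod W M \<Longrightarrow> a \<in> M \<Longrightarrow> b \<in> M \<Longrightarrow> a \<noteq> b \<Longrightarrow> c \<in> W \<Longrightarrow> c \<notin> M \<Longrightarrow> \<not> prime_set W"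
  unfolding prime_set_def by blast

lemma prime_set_mod_cases:
  assumes "prime_set Z" "Z \<subseteq> W" "is_mod W M"
  obtains "M \<inter> Z = {}" | "Z \<subseteq> M" | \<alpha> where "\<alpha> \<in> Z" "M \<inter> Z = {\<alpha>}"
  using prime_set_mod_trivial[OF assms(1) is_mod_restrict[OF assms(3,2)]] by blast

text \<open>For a prime set Z and u outside Z, \<^term>\<open>in_ext Z u\<close> and \<^term>\<open>in_ext_at Z u \<alpha>\<close>
  say u \<in> \<langle>Z\<rangle> and u \<in> Z(\<alpha>).\<close>

definition in_ext :: "'a set \<Rightarrow> 'a \<Rightarrow> bool" where
  "in_ext Z u \<longleftrightarrow> u \<in> V - Z \<and> (\<forall>a\<in>Z. \<forall>b\<in>Z. \<not> separates u a b)"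

definition in_ext_at :: "'a set \<Rightarrow> 'a \<Rightarrow> 'a \<Rightarrow> bool" where
  "in_ext_at Z u \<alpha> \<longleftrightarrow> u \<in> V - Z \<and> \<alpha> \<in> Z \<and> (\<forall>x\<in>Z - {\<alpha>}. \<not> separates x \<alpha> u)"

definition prime_ext :: "'a set \<Rightarrow> 'a \<Rightarrow> bool" where
  "prime_ext Z u \<longleftrightarrow> u \<in> V - Z \<and> prime_set (Z \<union> {u})"

definition prime_pair :: "'a set \<Rightarrow> 'a \<Rightarrow> 'a \<Rightarrow> bool" where
  "prime_pair Z p q \<longleftrightarrow> p \<noteq> q \<and> p \<in> V - Z \<and> q \<in> V - Z \<and> prime_set (Z \<union> {p, q})"

definition indist :: "'a set \<Rightarrow> 'a \<Rightarrow> 'a \<Rightarrow> bool" where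
  "indist Z a b \<longleftrightarrow> (\<forall>x\<in>Z. \<not> separates x a b)"

definition same_kind :: "'a set \<Rightarrow> 'a \<Rightarrow> 'a \<Rightarrow> bool" where
  "same_kind Z p q \<longleftrightarrow> (in_ext Z p \<and> in_ext Z q) \<or> (\<exists>\<alpha>. in_ext_at Z p \<alpha> \<and> in_ext_at Z q \<alpha>)"

text \<open>z stays in \<langle>Z \<union> {p}\<rangle>, resp. in (Z \<union> {p})(\<alpha>), once p is added.\<close>

definition keeps_kind :: "'a set \<Rightarrow> 'a \<Rightarrow> 'a \<Rightarrow> bool" where
  "keeps_kind Z p z \<longleftrightarrow>
     (in_ext Z z \<and> (\<forall>x\<in>Z. \<not> separates z p x)) \<or> (\<exists>\<alpha>. in_ext_at Z z \<alpha> \<and> \<not> separates p \<alpha> z)"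

lemma prime_pair_sym: "prime_pair Z p q \<Longrightarrow> prime_pair Z q p"
  unfolding prime_pair_def by (auto simp add: insert_commute)

lemma prime_pair_outside: "prime_pair Z p q \<Longrightarrow> p \<in> V - Z \<and> q \<in> V - Z \<and> p \<noteq> q"
  unfolding prime_pair_def by blast

lemma same_kind_sym: "same_kind Z p q \<Longrightarrow> same_kind Z q p"
  unfolding same_kind_def by blast

lemma indist_refl: "indist Z a a"
  unfolding indist_def using not_separates_refl by blast

lemma indist_sym: "indist Z a b \<Longrightarrow> indist Z b a"
  unfolding indist_def using not_separates_sym by blast

lemma indist_trans: "indist Z a b \<Longrightarrow> indist Z b c \<Longrightarrow> indist Z a c"
  unfolding indist_def using not_separates_trans by blast

lemma in_ext_indist: assumes "indist Z a b" "in_ext Z a" "b \<in> V - Z" shows "in_ext Z b"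
  unfolding in_ext_def
proof (intro conjI ballI)
  fix x y assume "x \<in> Z" "y \<in> Z"
  then have "\<not> separates x a b" "\<not> separates y a b" "\<not> separates a x y"
    using assms(1,2) unfolding indist_def in_ext_def by auto
  then show "\<not> separates b x y" unfolding separates_def by metis
qed (use assms in auto)

lemma in_ext_at_indist: "indist Z a b \<Longrightarrow> in_ext_at Z a \<alpha> \<Longrightarrow> b \<in> V - Z \<Longrightarrow> in_ext_at Z b \<alpha>"
  unfolding indist_def in_ext_at_def using not_separates_trans by blast

lemma same_kind_indist: "same_kind Z z q \<Longrightarrow> indist Z p z \<Longrightarrow> p \<in> V - Z \<Longrightarrow> same_kind Z p q"
  unfolding same_kind_def using in_ext_indist in_ext_at_indist indist_sym by blast

end

locale prime_sub = two_struct +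
  fixes X :: "'a set"
  assumes prime_X: "prime_set X"
begin

lemma X_large: "large X"
  using prime_set_large[OF prime_X] .

lemma kind_of_not_prime_insert:
  assumes u: "u \<in> V - X" "\<not> prime_set (X \<union> {u})"
  shows "in_ext X u \<or> (\<exists>\<alpha>. in_ext_at X u \<alpha>)"
proof -
  have "large (X \<union> {u})" using large_mono[OF X_large] by blast
  then obtain M where M: "is_mod (X \<union> {u}) M" "M \<noteq> {}" "M \<noteq> X \<union> {u}" "\<forall>x. M \<noteq> {x}"
    using u(2) unfolding prime_set_def by auto
  have MXu: "M \<subseteq> X \<union> {u}" using is_mod_subset[OF M(1)] .
  have "X \<subseteq> X \<union> {u}" by blast
  from prime_set_mod_cases[OF prime_X this M(1)] show ?thesis
  proof cases
    case 1
    with MXu have "M \<subseteq> {u}" by blast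
    then show ?thesis using M by (metis subset_singletonD)
  next
    case 2
    with MXu have "M = X" using M(3) u(1) by blast
    then show ?thesis using M(1) u(1) unfolding in_ext_def is_mod_def by blast
  next
    case (3 \<alpha>)
    with MXu M(4) have M_eq: "M = {\<alpha>, u}" by blast
    have "in_ext_at X u \<alpha>" unfolding in_ext_at_def
    proof (intro conjI ballI)
      fix x assume "x \<in> X - {\<alpha>}"
      then show "\<not> separates x \<alpha> u" using is_modD[OF M(1), of \<alpha> u x] M_eq u(1) by auto
    qed (use u(1) 3 in auto)
    then show ?thesis by blast
  qed
qed

lemma kind_of_not_prime_ext:
  "u \<in> V - X \<Longrightarrow> \<not> prime_ext X u \<Longrightarrow> in_ext X u \<or> (\<exists>\<alpha>. in_ext_at X u \<alpha>)"
  using kind_of_not_prime_insert unfolding prime_ext_def by blast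

lemma in_ext_at_unique:
  assumes "in_ext_at X u \<alpha>" "in_ext_at X u \<beta>"
  shows "\<alpha> = \<beta>"
proof (rule ccontr)
  assume "\<alpha> \<noteq> \<beta>"
  moreover obtain c where "c \<in> X" "c \<noteq> \<alpha>" "c \<noteq> \<beta>" using large_third[OF X_large] by blast
  moreover have "is_mod X {\<alpha>, \<beta>}"
  proof (rule is_modI)
    show "{\<alpha>, \<beta>} \<subseteq> X" using assms unfolding in_ext_at_def by blast
  next
    fix a b w assume "a \<in> {\<alpha>, \<beta>}" "b \<in> {\<alpha>, \<beta>}" "w \<in> X" "w \<notin> {\<alpha>, \<beta>}"
    then have "\<not> separates w a u" "\<not> separates w b u" using assms unfolding in_ext_at_def by auto
    then show "\<not> separates w a b" using not_separates_sym not_separates_trans by blast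
  qed
  ultimately show False using nontrivial_mod_not_prime_set prime_X by blast
qed

lemma not_in_ext_and_at:
  assumes "in_ext X u" "in_ext_at X u \<alpha>"
  shows False
proof -
  obtain c1 c2 where c: "c1 \<in> X" "c2 \<in> X" "c1 \<noteq> \<alpha>" "c2 \<noteq> \<alpha>" "c1 \<noteq> c2"
    using large_third[OF X_large, of \<alpha>] large_third[OF X_large] by metis
  have "is_mod X (X - {\<alpha>})"
  proof (rule is_modI)
    fix a b w assume ab: "a \<in> X - {\<alpha>}" "b \<in> X - {\<alpha>}" and "w \<in> X" "w \<notin> X - {\<alpha>}"
    then have "w = \<alpha>" by blast
    moreover have "\<not> separates a \<alpha> u" "\<not> separates b \<alpha> u" "\<not> separates u a b"
      using assms ab unfolding in_ext_def in_ext_at_def by auto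
    ultimately show "\<not> separates w a b" unfolding separates_def by metis
  qed auto
  moreover have "\<alpha> \<in> X" using assms(2) in_ext_at_def by blast
  ultimately show False using nontrivial_mod_not_prime_set[of X "X - {\<alpha>}" c1 c2 \<alpha>] c prime_X by blast
qed

lemma prime_ext_not_in_ext:
  assumes "prime_ext X u" "in_ext X u"
  shows False
proof -
  obtain c1 c2 where "c1 \<in> X" "c2 \<in> X" "c1 \<noteq> c2" using large_obtain_two[OF X_large] .
  moreover have "is_mod (X \<union> {u}) X"
    using assms(2) unfolding in_ext_def by (intro is_modI) auto
  ultimately show False
    using nontrivial_mod_not_prime_set[of "X \<union> {u}" X c1 c2 u] assms unfolding prime_ext_def by blast
qed

lemma prime_ext_not_in_ext_at:
  assumes "prime_ext X u" "in_ext_at X u \<alpha>"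
  shows False
proof -
  obtain c where c: "c \<in> X" "c \<noteq> \<alpha>" using large_third[OF X_large] by blast
  have u: "u \<in> V" "u \<notin> X" "\<alpha> \<in> X" using assms(2) unfolding in_ext_at_def by auto
  have "is_mod (X \<union> {u}) {\<alpha>, u}"
  proof (rule is_modI_pivot[where p = \<alpha>])
    fix b w assume "b \<in> {\<alpha>, u}" "w \<in> X \<union> {u}" "w \<notin> {\<alpha>, u}"
    then show "\<not> separates w \<alpha> b"
      using assms(2) not_separates_refl unfolding in_ext_at_def by blast
  qed (use u in auto)
  then show False
    using nontrivial_mod_not_prime_set[of "X \<union> {u}" "{\<alpha>, u}" \<alpha> u c] c assms u
    unfolding prime_ext_def by blast
qed

lemma indist_same_kind:
  assumes "indist X a b" "\<not> prime_ext X a" "a \<in> V - X" "b \<in> V - X"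
  shows "same_kind X a b"
  using kind_of_not_prime_ext[OF assms(3,2)] in_ext_indist[OF assms(1)] in_ext_at_indist[OF assms(1)] assms(4)
  unfolding same_kind_def by blast

lemma keeps_kind_in_ext_at: "keeps_kind X w a \<Longrightarrow> in_ext_at X a \<alpha> \<Longrightarrow> \<not> separates w \<alpha> a"
  unfolding keeps_kind_def using not_in_ext_and_at in_ext_at_unique by blast

lemma keeps_kind_in_ext: "keeps_kind X a w \<Longrightarrow> in_ext X w \<Longrightarrow> \<forall>x\<in>X. \<not> separates w a x"
  unfolding keeps_kind_def using not_in_ext_and_at by blast

lemma prime_pair_not_keeps_kind:
  assumes G: "prime_pair X p q"
  shows "\<not> keeps_kind X p q"
proof
  have pq: "p \<in> V - X" "q \<in> V - X" "p \<noteq> q" "prime_set (X \<union> {p, q})"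
    using G unfolding prime_pair_def by auto
  assume "keeps_kind X p q"
  then consider (ext) "in_ext X q" "\<forall>x\<in>X. \<not> separates q p x"
    | (at) \<alpha> where "in_ext_at X q \<alpha>" "\<not> separates p \<alpha> q"
    unfolding keeps_kind_def by blast
  then show False
  proof cases
    case ext
    obtain c1 c2 where c: "c1 \<in> X" "c2 \<in> X" "c1 \<noteq> c2" using large_obtain_two[OF X_large] .
    have "is_mod (X \<union> {p, q}) (X \<union> {p})"
    proof (rule is_modI_pivot[where p = c1])
      fix a w assume "a \<in> X \<union> {p}" "w \<in> X \<union> {p, q}" "w \<notin> X \<union> {p}"
      then show "\<not> separates w c1 a"
        using ext c(1) not_separates_sym unfolding in_ext_def by blast
    qed (use c in auto)
    then show False
      using nontrivial_mod_not_prime_set[of "X \<union> {p, q}" "X \<union> {p}" c1 c2 q] c pq by blast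
  next
    case at
    have "is_mod (X \<union> {p, q}) {\<alpha>, q}"
    proof (rule is_modI_pivot[where p = \<alpha>])
      fix a w assume "a \<in> {\<alpha>, q}" "w \<in> X \<union> {p, q}" "w \<notin> {\<alpha>, q}"
      then show "\<not> separates w \<alpha> a"
        using at not_separates_refl unfolding in_ext_at_def by blast
    qed (use at(1) in \<open>auto simp: in_ext_at_def\<close>)
    moreover have "\<alpha> \<noteq> q" "p \<notin> {\<alpha>, q}" using at(1) pq unfolding in_ext_at_def by auto
    ultimately show False
      using nontrivial_mod_not_prime_set[of "X \<union> {p, q}" "{\<alpha>, q}" \<alpha> q p] pq by blast
  qed
qed

lemma prime_pair_not_same_kind:
  assumes G: "prime_pair X p q"
  shows "\<not> same_kind X p q"
proof
  have pq: "p \<in> V - X" "q \<in> V - X" "p \<noteq> q" "prime_set (X \<union> {p, q})"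
    using G unfolding prime_pair_def by auto
  assume "same_kind X p q"
  then consider (ext) "in_ext X p" "in_ext X q" | (at) \<alpha> where "in_ext_at X p \<alpha>" "in_ext_at X q \<alpha>"
    unfolding same_kind_def by blast
  then show False
  proof cases
    case ext
    obtain c1 c2 where c: "c1 \<in> X" "c2 \<in> X" "c1 \<noteq> c2" using large_obtain_two[OF X_large] .
    have "is_mod (X \<union> {p, q}) X"
      using ext unfolding in_ext_def by (intro is_modI) auto
    then show False using nontrivial_mod_not_prime_set[of "X \<union> {p, q}" X c1 c2 p] c pq by blast
  next
    case at
    obtain c where c: "c \<in> X" "c \<noteq> \<alpha>" using large_third[OF X_large] by blast
    have "is_mod (X \<union> {p, q}) {\<alpha>, p, q}"
    proof (rule is_modI_pivot[where p = \<alpha>])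
      fix a w assume "a \<in> {\<alpha>, p, q}" "w \<in> X \<union> {p, q}" "w \<notin> {\<alpha>, p, q}"
      then show "\<not> separates w \<alpha> a" using at not_separates_refl unfolding in_ext_at_def by blast
    qed (use at in \<open>auto simp: in_ext_at_def\<close>)
    moreover have "\<alpha> \<noteq> p" "c \<notin> {\<alpha>, p, q}" using at pq c unfolding in_ext_at_def by auto
    ultimately show False
      using nontrivial_mod_not_prime_set[of "X \<union> {p, q}" "{\<alpha>, p, q}" \<alpha> p c] c pq by blast
  qed
qed

context
  fixes p q M
  assumes pq: "p \<in> V - X" "q \<in> V - X" "p \<noteq> q"
    and not_ext: "\<not> prime_ext X p" "\<not> prime_ext X q"
    and not_same: "\<not> same_kind X p q" and not_keeps: "\<not> keeps_kind X p q"
    and M: "is_mod (X \<union> {p, q}) M"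
begin

lemma pair_mod_disjoint_trivial:
  assumes "M \<inter> X = {}"
  shows "M = {} \<or> M = X \<union> {p, q} \<or> (\<exists>x. M = {x})"
proof (rule ccontr)
  assume nt: "\<not> ?thesis"
  have "M \<subseteq> {p, q}" using is_mod_subset[OF M] assms by blast
  with nt have "p \<in> M" "q \<in> M" by (metis insert_commute subset_insert subset_singletonD)+
  then have "indist X p q" unfolding indist_def using is_modD[OF M] assms by blast
  then show False using indist_same_kind not_ext(1) pq not_same by blast
qed

lemma pair_mod_superset_trivial:
  assumes XM: "X \<subseteq> M"
  shows "M = {} \<or> M = X \<union> {p, q} \<or> (\<exists>x. M = {x})"
proof (rule ccontr)
  assume nt: "\<not> ?thesis"
  have out: "u \<in> X \<union> {p, q} \<Longrightarrow> u \<notin> M \<Longrightarrow> \<forall>a\<in>X. \<forall>b\<in>X. \<not> separates u a b" for u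
    using is_modD[OF M] XM by blast
  have "p \<notin> M \<or> q \<notin> M" using nt XM is_mod_subset[OF M] by blast
  then consider "p \<in> M" "q \<notin> M" | "p \<notin> M" "q \<in> M" | "p \<notin> M" "q \<notin> M" by blast
  then show False
  proof cases
    case 1
    have "in_ext X q" unfolding in_ext_def using out 1 pq by blast
    moreover have "\<forall>x\<in>X. \<not> separates q p x" using is_modD[OF M, of p _ q] XM 1 by blast
    ultimately show False using not_keeps unfolding keeps_kind_def by blast
  next
    case 2
    have p_ext: "in_ext X p" unfolding in_ext_def using out 2 pq by blast
    have q_like_X: "\<forall>x\<in>X. \<not> separates p q x" using is_modD[OF M, of q _ p] XM 2 by blast
    from kind_of_not_prime_ext[OF pq(2) not_ext(2)] show False
    proof
      assume "in_ext X q" then show False using p_ext not_same unfolding same_kind_def by blast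
    next
      assume "\<exists>\<beta>. in_ext_at X q \<beta>"
      then obtain \<beta> where "in_ext_at X q \<beta>" by blast
      moreover from this have "\<not> separates p \<beta> q"
        using q_like_X not_separates_sym unfolding in_ext_at_def by blast
      ultimately show False using not_keeps unfolding keeps_kind_def by blast
    qed
  next
    case 3
    then have "in_ext X p" "in_ext X q" unfolding in_ext_def using out pq by blast+
    then show False using not_same unfolding same_kind_def by blast
  qed
qed

lemma pair_mod_single_trivial:
  assumes \<alpha>: "\<alpha> \<in> X" "M \<inter> X = {\<alpha>}"
  shows "M = {} \<or> M = X \<union> {p, q} \<or> (\<exists>x. M = {x})"
proof (rule ccontr)
  assume nt: "\<not> ?thesis"
  have \<alpha>M: "\<alpha> \<in> M" using \<alpha> by blast
  have M_sub: "M \<subseteq> {\<alpha>, p, q}" using \<alpha> is_mod_subset[OF M] by blast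
  have at_if_in: "in_ext_at X u \<alpha>" if "u \<in> M" "u \<in> {p, q}" for u
    unfolding in_ext_at_def using is_modD[OF M \<alpha>M that(1)] \<alpha> that pq by blast
  show False
  proof (cases "p \<in> M")
    case pM: True
    have p_at: "in_ext_at X p \<alpha>" using at_if_in pM by blast
    show False
    proof (cases "q \<in> M")
      case True
      then show False using at_if_in p_at not_same unfolding same_kind_def by blast
    next
      case qM: False
      have q_\<alpha>p: "\<not> separates q \<alpha> p" using is_modD[OF M \<alpha>M pM] qM pq by blast
      from kind_of_not_prime_ext[OF pq(2) not_ext(2)] show False
      proof
        assume q_ext: "in_ext X q"
        have "\<forall>x\<in>X. \<not> separates q p x"
          using q_ext q_\<alpha>p \<alpha>(1) not_separates_sym not_separates_trans unfolding in_ext_def by blast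
        then show False using q_ext not_keeps unfolding keeps_kind_def by blast
      next
        assume "\<exists>\<beta>. in_ext_at X q \<beta>"
        then obtain \<beta> where q_at: "in_ext_at X q \<beta>" by blast
        have "\<beta> \<noteq> \<alpha>" using q_at p_at not_same unfolding same_kind_def by blast
        then have "\<not> separates \<beta> \<alpha> p" "\<not> separates \<alpha> \<beta> q"
          using p_at q_at \<alpha>(1) unfolding in_ext_at_def by blast+
        then have "\<not> separates p \<beta> q" using q_\<alpha>p unfolding separates_def by metis
        then show False using q_at not_keeps unfolding keeps_kind_def by blast
      qed
    qed
  next
    case pM: False
    then have qM: "q \<in> M" using nt M_sub \<alpha>M by blast
    have "in_ext_at X q \<alpha>" using at_if_in qM by blast
    moreover have "\<not> separates p \<alpha> q" using is_modD[OF M \<alpha>M qM] pM pq by blast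
    ultimately show False using not_keeps unfolding keeps_kind_def by blast
  qed
qed

end

lemma prime_pairI:
  assumes pq: "p \<in> V - X" "q \<in> V - X" "p \<noteq> q"
    and not_ext: "\<not> prime_ext X p" "\<not> prime_ext X q"
    and not_same: "\<not> same_kind X p q" and not_keeps: "\<not> keeps_kind X p q"
  shows "prime_pair X p q"
proof -
  have "prime_set (X \<union> {p, q})"
  proof (rule prime_setI)
    show "large (X \<union> {p, q})" using large_mono[OF X_large] by blast
  next
    fix M assume M: "is_mod (X \<union> {p, q}) M"
    have "X \<subseteq> X \<union> {p, q}" by blast
    from prime_set_mod_cases[OF prime_X this M]
    show "M = {} \<or> M = X \<union> {p, q} \<or> (\<exists>x. M = {x})"
      using pair_mod_disjoint_trivial[OF assms M] pair_mod_superset_trivial[OF assms M]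
        pair_mod_single_trivial[OF assms M] by metis
  qed
  then show ?thesis using pq unfolding prime_pair_def by blast
qed

lemma not_prime_pair_keeps_kind:
  "p \<in> V - X \<Longrightarrow> q \<in> V - X \<Longrightarrow> p \<noteq> q \<Longrightarrow> \<not> prime_ext X p \<Longrightarrow> \<not> prime_ext X q
    \<Longrightarrow> \<not> same_kind X p q \<Longrightarrow> \<not> prime_pair X p q \<Longrightarrow> keeps_kind X p q"
  using prime_pairI by blast

lemma indist_not_prime_pair:
  "indist X a b \<Longrightarrow> \<not> prime_ext X a \<Longrightarrow> a \<in> V - X \<Longrightarrow> b \<in> V - X \<Longrightarrow> \<not> prime_pair X a b"
  using prime_pair_not_same_kind indist_same_kind by blast

lemma keeps_kind_indist_transfer:
  assumes "keeps_kind X q z" "indist X p z" "\<not> separates q p z" "p \<in> V - X"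
  shows "keeps_kind X q p"
proof -
  from assms(1) consider (ext) "in_ext X z" "\<forall>x\<in>X. \<not> separates z q x"
    | (at) \<alpha> where "in_ext_at X z \<alpha>" "\<not> separates q \<alpha> z"
    unfolding keeps_kind_def by blast
  then show ?thesis
  proof cases
    case ext
    have "in_ext X p" using in_ext_indist[OF indist_sym[OF assms(2)] ext(1) assms(4)] .
    moreover have "\<forall>x\<in>X. \<not> separates p q x"
    proof
      fix x assume "x \<in> X"
      then have "\<not> separates z q x" "\<not> separates x p z"
        using ext(2) assms(2) unfolding indist_def by auto
      then show "\<not> separates p q x" using assms(3) unfolding separates_def by metis
    qed
    ultimately show ?thesis unfolding keeps_kind_def by blast
  next
    case at
    have "in_ext_at X p \<alpha>" using in_ext_at_indist[OF indist_sym[OF assms(2)] at(1) assms(4)] .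
    moreover have "\<not> separates q \<alpha> p"
      using at(2) assms(3) not_separates_sym not_separates_trans by blast
    ultimately show ?thesis unfolding keeps_kind_def by blast
  qed
qed

lemma prime_pair_indist_twin:
  assumes G: "prime_pair X p q"
    and z: "indist X p z" "\<not> separates q p z" "z \<in> V - X" "z \<noteq> q"
    and not_ext: "\<not> prime_ext X z" "\<not> prime_ext X q"
  shows "prime_pair X z q"
proof (rule ccontr)
  assume not_G: "\<not> prime_pair X z q"
  have pq: "p \<in> V - X" "q \<in> V - X" using prime_pair_outside[OF G] by auto
  have "\<not> same_kind X q z"
    using same_kind_indist[OF same_kind_sym z(1)] pq prime_pair_not_same_kind[OF G] by blast
  moreover have "\<not> prime_pair X q z" using not_G prime_pair_sym by blast
  ultimately have "keeps_kind X q z"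
    using not_prime_pair_keeps_kind[OF pq(2) z(3)] z(4) not_ext by blast
  then have "keeps_kind X q p" using keeps_kind_indist_transfer z(1,2) pq by blast
  then show False using prime_pair_not_keeps_kind[OF prime_pair_sym[OF G]] by blast
qed

lemma triple_not_prime_cases:
  assumes G: "prime_pair X p q" and z: "z \<in> V - X" "z \<noteq> p" "z \<noteq> q"
    and not_prime: "\<not> prime_set (X \<union> {p, q, z})"
  shows "(keeps_kind X p z \<and> keeps_kind X q z) \<or> (indist X p z \<and> \<not> separates q p z)
    \<or> (indist X q z \<and> \<not> separates p q z)"
proof -
  let ?P = "X \<union> {p, q}"
  have pq: "p \<in> V - X" "q \<in> V - X" "prime_set ?P" using G unfolding prime_pair_def by auto
  have "large (X \<union> {p, q, z})" using large_mono[OF X_large] by blast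
  then obtain M where M: "is_mod (X \<union> {p, q, z}) M" "M \<noteq> {}" "M \<noteq> X \<union> {p, q, z}" "\<forall>x. M \<noteq> {x}"
    using not_prime unfolding prime_set_def by auto
  have M_sub: "M \<subseteq> X \<union> {p, q, z}" using is_mod_subset[OF M(1)] .
  have "?P \<subseteq> X \<union> {p, q, z}" by blast
  from prime_set_mod_cases[OF pq(3) this M(1)] show ?thesis
  proof cases
    case 1
    with M_sub have "M \<subseteq> {z}" by blast
    then show ?thesis using M(2,4) subset_singletonD by metis
  next
    case 2
    then have zM: "z \<notin> M" using M(3) M_sub by blast
    have sep_z: "\<forall>a\<in>?P. \<forall>b\<in>?P. \<not> separates z a b" using is_modD[OF M(1)] 2 zM by blast
    then have "in_ext X z" unfolding in_ext_def using z by blast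
    then show ?thesis using sep_z unfolding keeps_kind_def by blast
  next
    case (3 y)
    have zM: "z \<in> M" using 3 M_sub M(4) by blast
    have nsw: "\<not> separates w y z" if "w \<in> ?P" "w \<noteq> y" for w
      using is_modD[OF M(1), of y z w] 3 zM that by blast
    consider (yX) "y \<in> X" | (yp) "y = p" | (yq) "y = q" using 3 by blast
    then show ?thesis
    proof cases
      case yX
      have "in_ext_at X z y" unfolding in_ext_at_def using nsw yX z by blast
      moreover have "\<not> separates p y z" "\<not> separates q y z" using nsw yX pq by auto
      ultimately show ?thesis unfolding keeps_kind_def by blast
    next
      case yp
      then show ?thesis using nsw prime_pair_outside[OF G] unfolding indist_def by auto
    next
      case yq
      then show ?thesis using nsw prime_pair_outside[OF G] unfolding indist_def by auto
    qed
  qed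
qed

lemma keeps_kind_added_not_separates:
  assumes "keeps_kind X u a" "keeps_kind X u b" "indist X a b"
  shows "\<not> separates u a b"
proof -
  from assms(1) consider (ext) "in_ext X a" "\<forall>x\<in>X. \<not> separates a u x"
    | (at) \<alpha> where "in_ext_at X a \<alpha>" "\<not> separates u \<alpha> a"
    unfolding keeps_kind_def by blast
  then show ?thesis
  proof cases
    case ext
    have b_ext: "in_ext X b" using in_ext_indist[OF assms(3) ext(1)] assms(2)
      unfolding keeps_kind_def in_ext_def in_ext_at_def by blast
    obtain x where x: "x \<in> X" using large_third[OF X_large] by blast
    have "\<not> separates a u x" "\<not> separates b u x" "\<not> separates x a b"
      using ext keeps_kind_in_ext[OF assms(2) b_ext] x assms(3) unfolding indist_def by auto
    then show ?thesis unfolding separates_def by metis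
  next
    case at
    have "in_ext_at X b \<alpha>" using in_ext_at_indist[OF assms(3) at(1)] assms(2)
      unfolding keeps_kind_def in_ext_def in_ext_at_def by blast
    then have "\<not> separates u \<alpha> b" using keeps_kind_in_ext_at[OF assms(2)] by blast
    then show ?thesis using at(2) not_separates_sym not_separates_trans by blast
  qed
qed

lemma keeps_kind_kept_not_separates:
  assumes "keeps_kind X a u" "keeps_kind X b u" "indist X a b"
  shows "\<not> separates u a b"
proof -
  from assms(1) consider (ext) "in_ext X u" "\<forall>x\<in>X. \<not> separates u a x"
    | (at) \<alpha> where "in_ext_at X u \<alpha>" "\<not> separates a \<alpha> u"
    unfolding keeps_kind_def by blast
  then show ?thesis
  proof cases
    case ext
    obtain x where "x \<in> X" using large_third[OF X_large] by blast
    then show ?thesis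
      using ext(2) keeps_kind_in_ext[OF assms(2) ext(1)] not_separates_sym not_separates_trans by blast
  next
    case at
    have "\<not> separates b \<alpha> u" using keeps_kind_in_ext_at[OF assms(2) at(1)] .
    moreover have "\<not> separates \<alpha> a b" using assms(3) at(1) unfolding indist_def in_ext_at_def by blast
    ultimately show ?thesis using at(2) unfolding separates_def by metis
  qed
qed

lemma prime_ext_keeps_kind_or_indist:
  assumes u: "prime_ext X u" and v: "v \<in> V - X" "v \<noteq> u" and not_G: "\<not> prime_pair X u v"
  shows "keeps_kind X u v \<or> indist X u v"
proof -
  have u': "u \<in> V - X" "prime_set (X \<union> {u})" using u unfolding prime_ext_def by auto
  interpret ext: prime_sub V E "X \<union> {u}" by unfold_locales (fact u'(2))
  have v': "v \<in> V - (X \<union> {u})" using v by blast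
  have "\<not> prime_set (X \<union> {u} \<union> {v})"
    using not_G u' v unfolding prime_pair_def by (simp add: insert_commute)
  from ext.kind_of_not_prime_insert[OF v' this] show ?thesis
  proof
    assume "in_ext (X \<union> {u}) v"
    then show ?thesis using v unfolding in_ext_def keeps_kind_def by blast
  next
    assume "\<exists>y. in_ext_at (X \<union> {u}) v y"
    then obtain y where y: "in_ext_at (X \<union> {u}) v y" by blast
    show ?thesis
    proof (cases "y = u")
      case True
      then show ?thesis using y u' unfolding in_ext_at_def indist_def by blast
    next
      case False
      then have "in_ext_at X v y" "\<not> separates u y v" using y v unfolding in_ext_at_def by auto
      then show ?thesis unfolding keeps_kind_def by blast
    qed
  qed
qed

end

text \<open>Towards the Ehrenfeucht--Rozenberg theorem: without prime pairs no outside vertex can be of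
  any kind.\<close>

locale no_prime_pair = prime_sub +
  assumes X_sub: "X \<subseteq> V" and prime_V: "prime_set V"
    and no_pair: "\<not> prime_pair X v w"
begin

lemma keeps_kind_if_not_same_kind:
  assumes "a \<in> V - X" "w \<in> V - X" "a \<noteq> w" "\<not> prime_ext X w" "\<not> same_kind X a w"
  shows "keeps_kind X a w"
proof (cases "prime_ext X a")
  case True
  have "\<not> indist X w a" using indist_same_kind assms same_kind_sym by blast
  then show ?thesis
    using prime_ext_keeps_kind_or_indist[OF True] assms no_pair indist_sym by blast
next
  case False
  then show ?thesis using not_prime_pair_keeps_kind assms no_pair by blast
qed

lemma not_in_ext: "\<not> in_ext X u"
proof
  assume u: "in_ext X u"
  obtain c1 c2 where c: "c1 \<in> X" "c2 \<in> X" "c1 \<noteq> c2" using large_obtain_two[OF X_large] .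
  let ?M = "V - {w. in_ext X w}"
  have "is_mod V ?M"
  proof (rule is_modI_pivot[where p = c1])
    fix a w assume a: "a \<in> ?M" and w: "w \<in> V" "w \<notin> ?M"
    then have w_ext: "in_ext X w" "w \<in> V - X" unfolding in_ext_def by auto
    show "\<not> separates w c1 a"
    proof (cases "a \<in> X")
      case True
      then show ?thesis using w_ext c unfolding in_ext_def by blast
    next
      case False
      then have "a \<in> V - X" "\<not> in_ext X a" using a by auto
      moreover have "\<not> same_kind X a w" "\<not> prime_ext X w"
        using calculation(2) w_ext not_in_ext_and_at prime_ext_not_in_ext unfolding same_kind_def
        by blast+
      ultimately have "keeps_kind X a w" using keeps_kind_if_not_same_kind w_ext by blast
      then show ?thesis using keeps_kind_in_ext w_ext(1) c(1) not_separates_sym by blast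
    qed
  qed (use c X_sub in \<open>auto simp: in_ext_def\<close>)
  moreover have "u \<in> V" "u \<notin> ?M" "c1 \<in> ?M" "c2 \<in> ?M"
    using u c X_sub unfolding in_ext_def by auto
  ultimately show False using nontrivial_mod_not_prime_set[of V ?M c1 c2 u] c(3) prime_V by blast
qed

lemma not_in_ext_at: "\<not> in_ext_at X m \<alpha>"
proof
  assume m: "in_ext_at X m \<alpha>"
  let ?M = "insert \<alpha> {a. in_ext_at X a \<alpha>}"
  have \<alpha>: "\<alpha> \<in> X" using m unfolding in_ext_at_def by blast
  obtain c where c: "c \<in> X" "c \<noteq> \<alpha>" using large_third[OF X_large] by blast
  have "is_mod V ?M"
  proof (rule is_modI_pivot[where p = \<alpha>])
    fix a w assume a: "a \<in> ?M" and w: "w \<in> V" "w \<notin> ?M"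
    show "\<not> separates w \<alpha> a"
    proof (cases "a = \<alpha>")
      case True
      then show ?thesis using not_separates_refl by blast
    next
      case False
      then have a_at: "in_ext_at X a \<alpha>" using a by blast
      show ?thesis
      proof (cases "w \<in> X")
        case True
        then show ?thesis using a_at w unfolding in_ext_at_def by blast
      next
        case False
        have "\<not> same_kind X w a"
          using not_in_ext in_ext_at_unique[OF a_at] w unfolding same_kind_def by blast
        moreover have "\<not> prime_ext X a" using prime_ext_not_in_ext_at a_at by blast
        moreover have "a \<in> V - X" "w \<noteq> a" using a_at w unfolding in_ext_at_def by auto
        ultimately have "keeps_kind X w a"
          using keeps_kind_if_not_same_kind w False by blast
        then show ?thesis using keeps_kind_in_ext_at a_at by blast
      qed
    qed
  qed (use \<alpha> X_sub in \<open>auto simp: in_ext_at_def\<close>)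
  moreover have "\<alpha> \<noteq> m" "c \<notin> ?M" "c \<in> V" using m c X_sub unfolding in_ext_at_def by auto
  ultimately show False using nontrivial_mod_not_prime_set[of V ?M \<alpha> m c] m prime_V by blast
qed

lemma outside_subsingleton:
  assumes "a \<in> V - X" "b \<in> V - X"
  shows "a = b"
proof (rule ccontr)
  assume "a \<noteq> b"
  have all_ext: "prime_ext X u" if "u \<in> V - X" for u
    using kind_of_not_prime_ext that not_in_ext not_in_ext_at by blast
  have "is_mod V (V - X)"
  proof (rule is_modI)
    fix x y w assume xy: "x \<in> V - X" "y \<in> V - X" and "w \<in> V" "w \<notin> V - X"
    show "\<not> separates w x y"
    proof (cases "x = y")
      case False
      have "\<not> keeps_kind X x y" using not_in_ext not_in_ext_at unfolding keeps_kind_def by blast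
      then have "indist X x y"
        using prime_ext_keeps_kind_or_indist[OF all_ext[OF xy(1)] xy(2)] False no_pair by blast
      then show ?thesis using \<open>w \<in> V\<close> \<open>w \<notin> V - X\<close> unfolding indist_def by blast
    qed (simp add: not_separates_refl)
  qed blast
  moreover obtain c where "c \<in> X" using large_third[OF X_large] by blast
  ultimately show False
    using nontrivial_mod_not_prime_set[of V "V - X" a b c] assms \<open>a \<noteq> b\<close> X_sub prime_V by blast
qed

end

context two_struct
begin

theorem exists_prime_pair:
  assumes "X \<subseteq> V" "prime_set X" "prime_set V" "a \<in> V - X" "b \<in> V - X" "a \<noteq> b"
  shows "\<exists>v w. prime_pair X v w"
proof (rule ccontr)
  assume "\<not> ?thesis"
  then interpret no_prime_pair V E X
    using assms(1-3) by unfold_locales auto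
  show False using outside_subsingleton assms(4-6) by blast
qed

lemma prime_minus_pair_if_even:
  assumes "prime_set V" "X \<subseteq> V" "prime_set X" "finite (V - X)"
    "even (card (V - X))" "2 \<le> card (V - X)"
  shows "\<exists>v w. v \<in> V - X \<and> w \<in> V - X \<and> v \<noteq> w \<and> prime_set (V - {v, w})"
  using assms(2-)
proof (induction "card (V - X)" arbitrary: X rule: less_induct)
  case less
  show ?case
  proof (cases "card (V - X) = 2")
    case True
    then obtain v w where vw: "V - X = {v, w}" "v \<noteq> w" using card_2_iff by metis
    then have "V - {v, w} = X" using less.prems(1) by blast
    then show ?thesis using vw less.prems(2) by blast
  next
    case False
    then have "4 \<le> card (V - X)" using less.prems(4,5) by presburger
    have "\<not> card (V - X) \<le> Suc 0" using less.prems(5) by simp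
    then obtain a b where "a \<in> V - X" "b \<in> V - X" "a \<noteq> b"
      using card_le_Suc0_iff_eq[OF less.prems(3)] by blast
    then obtain v w where vw: "prime_pair X v w"
      using exists_prime_pair[OF less.prems(1,2) assms(1)] by blast
    let ?Y = "X \<union> {v, w}"
    have vw': "v \<in> V - X" "w \<in> V - X" "v \<noteq> w" "prime_set ?Y" using vw unfolding prime_pair_def by auto
    have "V - ?Y = (V - X) - {v, w}" by blast
    then have card_Y: "card (V - ?Y) = card (V - X) - 2"
      using vw' less.prems(3) by (simp add: card_Diff_subset)
    have "\<exists>v' w'. v' \<in> V - ?Y \<and> w' \<in> V - ?Y \<and> v' \<noteq> w' \<and> prime_set (V - {v', w'})"
      using less.hyps[of ?Y] card_Y \<open>4 \<le> card (V - X)\<close> vw' less.prems by auto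
    then show ?thesis by blast
  qed
qed

lemma prime_minus_pair_via_core:
  assumes "prime_set V" "X \<subseteq> Y" "Y \<subseteq> V" "prime_set Y" "finite (V - X)"
    "even (card (V - Y))" "2 \<le> card (V - Y)"
  shows "\<exists>v w. v \<in> V - X \<and> w \<in> V - X \<and> v \<noteq> w \<and> prime_set (V - {v, w})"
proof -
  have "V - Y \<subseteq> V - X" using assms(2) by blast
  then have "finite (V - Y)" using assms(5) by (rule finite_subset)
  then show ?thesis using prime_minus_pair_if_even[OF assms(1,3,4) _ assms(6,7)] assms(2) by blast
qed

end

text \<open>The odd case after the easy reductions; s0_asym is all that is used of s0 \<in> q^a.\<close>

locale pair_ext_only = prime_sub +
  fixes s0 :: 'a
  assumes X_sub: "X \<subseteq> V" and prime_V: "prime_set V" and finite_outside: "finite (V - X)"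
    and no_single: "\<not> prime_ext X u"
    and no_triple: "\<lbrakk>p \<in> V - X; q \<in> V - X; z \<in> V - X; p \<noteq> q; p \<noteq> z; q \<noteq> z\<rbrakk>
      \<Longrightarrow> \<not> prime_set (X \<union> {p, q, z})"
    and s0: "s0 \<in> V - X"
    and s0_asym: "\<lbrakk>a \<in> V - X; b \<in> V - X; indist X s0 a; indist X s0 b;
      keeps_kind X a b; keeps_kind X b a\<rbrakk> \<Longrightarrow> False"
begin

definition nbrs :: "'a \<Rightarrow> 'a set" where
  "nbrs y = {q. prime_pair X y q}"

lemma kind_cases: "u \<in> V - X \<Longrightarrow> in_ext X u \<or> (\<exists>\<alpha>. in_ext_at X u \<alpha>)"
  using kind_of_not_prime_ext no_single by blast

lemma common_nbr_indist:
  assumes "prime_pair X p q" "prime_pair X p z" "z \<noteq> q"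
  shows "indist X q z \<and> \<not> separates p q z"
proof -
  have pqz: "p \<in> V - X" "q \<in> V - X" "z \<in> V - X" "p \<noteq> q" "p \<noteq> z"
    using assms prime_pair_outside by blast+
  then have "\<not> prime_set (X \<union> {p, q, z})" using no_triple assms(3) by blast
  moreover have "\<not> keeps_kind X p z" using prime_pair_not_keeps_kind[OF assms(2)] .
  moreover have "\<not> indist X p z" using indist_not_prime_pair no_single pqz assms(2) by blast
  ultimately show ?thesis using triple_not_prime_cases[OF assms(1) pqz(3)] pqz assms(3) by blast
qed

lemma non_nbr_keeps_kind:
  assumes G: "prime_pair X p q" and z: "z \<in> V - X" "z \<noteq> p" "z \<noteq> q"
    and not_G: "\<not> prime_pair X p z" "\<not> prime_pair X q z"
  shows "keeps_kind X p z \<and> keeps_kind X q z"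
proof -
  have pq: "p \<in> V - X" "q \<in> V - X" "p \<noteq> q" using prime_pair_outside[OF G] by auto
  have "\<not> prime_set (X \<union> {p, q, z})" using no_triple pq z by blast
  moreover have "\<not> (indist X p z \<and> \<not> separates q p z)"
    using prime_pair_indist_twin[OF G _ _ z(1,3) no_single no_single] not_G(2) prime_pair_sym by blast
  moreover have "\<not> (indist X q z \<and> \<not> separates p q z)"
    using prime_pair_indist_twin[OF prime_pair_sym[OF G] _ _ z(1,2) no_single no_single]
      not_G(1) prime_pair_sym by blast
  ultimately show ?thesis using triple_not_prime_cases[OF G z] by blast
qed

lemma keeps_kind_to_isolated:
  assumes "a \<in> V - X" "w \<in> V - X" "a \<noteq> w" "nbrs w = {}"
    and "nbrs a = {} \<Longrightarrow> \<not> same_kind X a w"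
  shows "keeps_kind X a w"
proof (cases "nbrs a = {}")
  case True
  moreover have "\<not> prime_pair X a w" using assms(4) prime_pair_sym unfolding nbrs_def by blast
  ultimately show ?thesis using not_prime_pair_keeps_kind assms no_single by blast
next
  case False
  then obtain q where q: "prime_pair X a q" unfolding nbrs_def by blast
  have "\<not> prime_pair X a w" "\<not> prime_pair X q w"
    using assms(4) prime_pair_sym unfolding nbrs_def by blast+
  moreover from this have "w \<noteq> q" using q by blast
  ultimately show ?thesis using non_nbr_keeps_kind[OF q assms(2)] assms(3) by blast
qed

lemma in_ext_at_has_nbr:
  assumes m: "in_ext_at X m \<alpha>"
  shows "nbrs m \<noteq> {}"
proof
  assume iso: "nbrs m = {}"
  let ?M = "insert \<alpha> {t. in_ext_at X t \<alpha> \<and> nbrs t = {}}"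
  have \<alpha>: "\<alpha> \<in> X" using m unfolding in_ext_at_def by blast
  obtain c where c: "c \<in> X" "c \<noteq> \<alpha>" using large_third[OF X_large] by blast
  have "is_mod V ?M"
  proof (rule is_modI_pivot[where p = \<alpha>])
    fix a w assume a: "a \<in> ?M" and w: "w \<in> V" "w \<notin> ?M"
    show "\<not> separates w \<alpha> a"
    proof (cases "a = \<alpha> \<or> w \<in> X")
      case True
      then show ?thesis using a w not_separates_refl unfolding in_ext_at_def by blast
    next
      case False
      then have a_at: "in_ext_at X a \<alpha>" and "nbrs a = {}" "w \<in> V - X" "w \<noteq> a" using a w by auto
      moreover have "a \<in> V - X" using a_at unfolding in_ext_at_def by blast
      moreover have "\<not> same_kind X w a" if "nbrs w = {}"
        using that w not_in_ext_and_at[OF _ a_at] in_ext_at_unique[OF a_at] unfolding same_kind_def by blast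
      ultimately have "keeps_kind X w a" using keeps_kind_to_isolated by blast
      then show ?thesis using keeps_kind_in_ext_at a_at by blast
    qed
  qed (use \<alpha> X_sub in \<open>auto simp: in_ext_at_def\<close>)
  moreover have "\<alpha> \<noteq> m" "m \<in> ?M" "c \<notin> ?M" "c \<in> V" using m iso c X_sub unfolding in_ext_at_def by auto
  ultimately show False using nontrivial_mod_not_prime_set[of V ?M \<alpha> m c] prime_V by blast
qed

lemma in_ext_has_nbr:
  assumes m: "in_ext X m"
  shows "nbrs m \<noteq> {}"
proof
  assume iso: "nbrs m = {}"
  obtain c1 c2 where c: "c1 \<in> X" "c2 \<in> X" "c1 \<noteq> c2" using large_obtain_two[OF X_large] .
  let ?M = "V - {t. in_ext X t \<and> nbrs t = {}}"
  have "is_mod V ?M"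
  proof (rule is_modI_pivot[where p = c1])
    fix a w assume a: "a \<in> ?M" and w: "w \<in> V" "w \<notin> ?M"
    then have w_ext: "in_ext X w" and w_iso: "nbrs w = {}" by auto
    show "\<not> separates w c1 a"
    proof (cases "a \<in> X")
      case True
      then show ?thesis using w_ext c unfolding in_ext_def by blast
    next
      case False
      then have "a \<in> V - X" "w \<in> V - X" "a \<noteq> w" using a w w_ext unfolding in_ext_def by auto
      moreover have "\<not> same_kind X a w" if "nbrs a = {}"
        using that a not_in_ext_and_at[OF w_ext] unfolding same_kind_def by blast
      ultimately have "keeps_kind X a w" using keeps_kind_to_isolated w_iso by blast
      then show ?thesis using keeps_kind_in_ext w_ext c(1) not_separates_sym by blast
    qed
  qed (use c X_sub in \<open>auto simp: in_ext_def\<close>)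
  moreover have "m \<in> V" "m \<notin> ?M" "c1 \<in> ?M" "c2 \<in> ?M" using m iso c X_sub unfolding in_ext_def by auto
  ultimately show False using nontrivial_mod_not_prime_set[of V ?M c1 c2 m] c(3) prime_V by blast
qed

lemma has_nbr: "u \<in> V - X \<Longrightarrow> \<exists>q. prime_pair X u q"
  using kind_cases in_ext_has_nbr in_ext_at_has_nbr unfolding nbrs_def by blast

lemma same_nbrs_indist:
  assumes "a \<in> V - X" "a \<noteq> b" "nbrs a = nbrs b"
  shows "indist X a b"
proof -
  obtain q where "prime_pair X a q" using has_nbr assms(1) by blast
  then have "prime_pair X q a" "prime_pair X q b"
    using assms(3) prime_pair_sym unfolding nbrs_def by blast+
  then show ?thesis using common_nbr_indist assms(2) by blast
qed

lemma same_nbrs_not_separates: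
  assumes ab: "a \<in> V - X" "b \<in> V - X" "a \<noteq> b" "nbrs a = nbrs b"
    and u: "u \<in> V - X" "nbrs u \<noteq> nbrs a"
  shows "\<not> separates u a b"
proof -
  have ab_indist: "indist X a b" using same_nbrs_indist ab by blast
  have ua: "u \<noteq> a" "u \<noteq> b" using u(2) ab(4) by auto
  have same: "prime_pair X a q \<longleftrightarrow> prime_pair X b q" for q using ab(4) unfolding nbrs_def by blast
  show ?thesis
  proof (cases "prime_pair X u a")
    case True
    then have "prime_pair X u b" using same prime_pair_sym by blast
    then show ?thesis using common_nbr_indist True ab(3) by blast
  next
    case not_ua: False
    then have not_ub: "\<not> prime_pair X u b" and not_au: "\<not> prime_pair X a u" "\<not> prime_pair X b u"
      using same prime_pair_sym by blast+
    show ?thesis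
    proof (cases "nbrs u \<subseteq> nbrs a")
      case False
      then obtain q where q: "prime_pair X u q" "\<not> prime_pair X a q" "\<not> prime_pair X b q"
        using same unfolding nbrs_def by blast
      have "q \<noteq> a" "q \<noteq> b" using q(1) not_ua not_ub by auto
      then have "keeps_kind X u a" "keeps_kind X u b"
        using non_nbr_keeps_kind[OF q(1) ab(1) ua(1)[symmetric]]
          non_nbr_keeps_kind[OF q(1) ab(2) ua(2)[symmetric]] not_ua not_ub q(2,3) prime_pair_sym
        by blast+
      then show ?thesis using keeps_kind_added_not_separates ab_indist by blast
    next
      case True
      then obtain q where q: "prime_pair X a q" "\<not> prime_pair X u q"
        using u(2) unfolding nbrs_def by blast
      have qb: "prime_pair X b q" using q(1) same by blast
      have "u \<noteq> q" using q(1) not_au by blast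
      then have "keeps_kind X a u" "keeps_kind X b u"
        using non_nbr_keeps_kind[OF q(1) u(1) ua(1)] non_nbr_keeps_kind[OF qb u(1) ua(2)]
          not_au q(2) prime_pair_sym by blast+
      then show ?thesis using keeps_kind_kept_not_separates ab_indist by blast
    qed
  qed
qed

lemma nbrs_inj:
  assumes "y \<in> V - X" "z \<in> V - X" "nbrs y = nbrs z"
  shows "y = z"
proof (rule ccontr)
  assume "y \<noteq> z"
  let ?T = "{t \<in> V - X. nbrs t = nbrs y}"
  have "is_mod V ?T"
  proof (rule is_modI)
    fix a b u assume a: "a \<in> ?T" and b: "b \<in> ?T" and u: "u \<in> V" "u \<notin> ?T"
    show "\<not> separates u a b"
    proof (cases "a = b")
      case True
      then show ?thesis using not_separates_refl by simp
    next
      case False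
      have ab: "a \<in> V - X" "b \<in> V - X" "nbrs a = nbrs b" using a b by auto
      show ?thesis
      proof (cases "u \<in> X")
        case True
        then show ?thesis using same_nbrs_indist[OF ab(1) False ab(3)] unfolding indist_def by blast
      next
        case False
        then show ?thesis using same_nbrs_not_separates[OF ab(1,2) \<open>a \<noteq> b\<close> ab(3)] u a by auto
      qed
    qed
  qed blast
  moreover obtain c where "c \<in> X" using large_third[OF X_large] by blast
  ultimately show False
    using nontrivial_mod_not_prime_set[of V ?T y z c] assms \<open>y \<noteq> z\<close> X_sub prime_V by blast
qed

definition S0 :: "'a set" where
  "S0 = {t \<in> V - X. indist X s0 t}"

lemma S0_nbrs_comparable:
  assumes "a \<in> S0" "b \<in> S0"
  shows "nbrs a \<subseteq> nbrs b \<or> nbrs b \<subseteq> nbrs a"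
proof (rule ccontr)
  assume "\<not> ?thesis"
  then obtain q q' where q: "prime_pair X a q" "\<not> prime_pair X b q"
    and q': "prime_pair X b q'" "\<not> prime_pair X a q'"
    unfolding nbrs_def by blast
  have ab: "a \<in> V - X" "b \<in> V - X" "indist X s0 a" "indist X s0 b" "a \<noteq> b"
    using assms q q' unfolding S0_def by auto
  have "\<not> prime_pair X a b"
    using indist_not_prime_pair indist_trans[OF indist_sym] ab no_single by blast
  then have not_G: "\<not> prime_pair X a b" "\<not> prime_pair X b a" "\<not> prime_pair X q b" "\<not> prime_pair X q' a"
    using q(2) q'(2) prime_pair_sym by blast+
  moreover have "b \<noteq> q" "a \<noteq> q'" using q(1) q'(1) not_G(1,2) by auto
  ultimately have "keeps_kind X a b" "keeps_kind X b a"
    using non_nbr_keeps_kind[OF q(1) ab(2)] non_nbr_keeps_kind[OF q'(1) ab(1)] ab(5) by blast+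
  then show False using s0_asym ab by blast
qed

lemma S0_min_nbrs:
  obtains s1 where "s1 \<in> S0" "\<And>t. t \<in> S0 \<Longrightarrow> nbrs s1 \<subseteq> nbrs t"
proof -
  have "S0 \<subseteq> V - X" unfolding S0_def by blast
  then have "finite S0" using finite_outside by (rule finite_subset)
  then have "finite (nbrs ` S0)" by simp
  moreover have "nbrs ` S0 \<noteq> {}" using s0 indist_refl unfolding S0_def by blast
  ultimately have "\<exists>m \<in> nbrs ` S0. \<forall>b \<in> nbrs ` S0. b \<subseteq> m \<longrightarrow> m = b"
    by (rule finite_has_minimal)
  then obtain m where m: "m \<in> nbrs ` S0" "\<forall>b \<in> nbrs ` S0. b \<subseteq> m \<longrightarrow> m = b" by blast
  then obtain s1 where s1: "s1 \<in> S0" "nbrs s1 = m" by blast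
  have "nbrs s1 \<subseteq> nbrs t" if t: "t \<in> S0" for t
    using S0_nbrs_comparable[OF s1(1) t]
  proof
    assume "nbrs t \<subseteq> nbrs s1"
    then show ?thesis using m(2) t s1(2) by blast
  qed
  then show thesis using that s1(1) by blast
qed

lemma nbrs_of_nbr_of_min:
  assumes s1: "s1 \<in> S0" "\<And>t. t \<in> S0 \<Longrightarrow> nbrs s1 \<subseteq> nbrs t" and c: "prime_pair X s1 c"
  shows "nbrs c = S0"
proof
  show "nbrs c \<subseteq> S0"
  proof
    fix t assume "t \<in> nbrs c"
    then have t: "prime_pair X c t" unfolding nbrs_def by blast
    show "t \<in> S0"
    proof (cases "t = s1")
      case False
      then have "indist X s1 t" using common_nbr_indist[OF prime_pair_sym[OF c] t] by blast
      then show ?thesis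
        using s1(1) indist_trans[of X s0 s1 t] prime_pair_outside[OF t] unfolding S0_def by blast
    qed (use s1 in simp)
  qed
next
  show "S0 \<subseteq> nbrs c"
    using s1(2) c prime_pair_sym unfolding nbrs_def by blast
qed

context
  fixes s1 c1
  assumes s1: "s1 \<in> S0" and nbrs_s1: "nbrs s1 = {c1}" and nbrs_c1: "nbrs c1 = S0"
begin

lemma s1_c1_outside: "s1 \<in> V - X" "c1 \<in> V - X" "s1 \<noteq> c1"
proof -
  have "prime_pair X s1 c1" using nbrs_s1 unfolding nbrs_def by blast
  then show "s1 \<in> V - X" "c1 \<in> V - X" "s1 \<noteq> c1" using prime_pair_outside by auto
qed

lemma nbrs_not_within_pair:
  assumes y: "y \<in> V - X" "y \<noteq> s1" "y \<noteq> c1"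
  shows "\<not> nbrs y \<subseteq> {s1, c1}"
proof
  assume sub: "nbrs y \<subseteq> {s1, c1}"
  have "s1 \<notin> nbrs y" using nbrs_s1 y(3) prime_pair_sym unfolding nbrs_def by blast
  then have "nbrs y \<subseteq> {c1}" using sub by blast
  moreover have "nbrs y \<noteq> {}" using has_nbr y(1) unfolding nbrs_def by blast
  ultimately have "nbrs y = {c1}" by blast
  then show False using nbrs_inj[OF y(1) s1_c1_outside(1)] nbrs_s1 y(2) by simp
qed

lemma mod_disjoint_nbrs_mono:
  assumes M: "is_mod (V - {s1, c1}) M" "M \<inter> X = {}" and ab: "a \<in> M" "b \<in> M"
    and q: "prime_pair X a q"
  shows "prime_pair X b q"
proof (rule ccontr)
  assume not_bq: "\<not> prime_pair X b q"
  have MR: "M \<subseteq> V - X - {s1, c1}" using is_mod_subset[OF M(1)] M(2) by blast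
  have ab_indist: "indist X a b" unfolding indist_def using is_modD[OF M(1) ab] M(2) X_sub s1_c1_outside by blast
  have qR: "q \<in> V - X" using prime_pair_outside[OF q] by blast
  consider "q = s1" | "q = c1" | "q \<in> M" | "q \<in> V - {s1, c1}" "q \<notin> M" using qR by blast
  then show False
  proof cases
    case 1
    then show False using nbrs_s1 q MR ab(1) prime_pair_sym unfolding nbrs_def by blast
  next
    case 2
    then have "a \<in> S0" using nbrs_c1 q prime_pair_sym unfolding nbrs_def by blast
    then have "b \<in> S0" using ab_indist indist_trans MR ab(2) unfolding S0_def by blast
    then show False using nbrs_c1 2 not_bq prime_pair_sym unfolding nbrs_def by blast
  next
    case 3
    have "indist X q a" unfolding indist_def using is_modD[OF M(1) 3 ab(1)] M(2) X_sub s1_c1_outside by blast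
    moreover have "a \<in> V - X" using MR ab(1) by blast
    ultimately show False using indist_not_prime_pair[OF _ no_single qR] prime_pair_sym[OF q] by blast
  next
    case 4
    have "\<not> separates q a b" using is_modD[OF M(1) ab 4] .
    moreover have "b \<noteq> q" using 4 ab(2) by blast
    ultimately show False
      using prime_pair_indist_twin[OF q ab_indist] MR ab(2) not_bq no_single by blast
  qed
qed

lemma mod_disjoint_trivial:
  assumes M: "is_mod (V - {s1, c1}) M" "M \<inter> X = {}" and ab: "a \<in> M" "b \<in> M"
  shows "a = b"
proof -
  have "a \<in> V - X" "b \<in> V - X" using ab is_mod_subset[OF M(1)] M(2) by blast+
  moreover have "nbrs a = nbrs b"
    using mod_disjoint_nbrs_mono[OF M] ab unfolding nbrs_def by blast
  ultimately show ?thesis using nbrs_inj by blast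
qed

lemma mod_single_trivial:
  assumes M: "is_mod (V - {s1, c1}) M" and \<alpha>: "\<alpha> \<in> X" "M \<inter> X = {\<alpha>}"
  shows "M = {\<alpha>}"
proof (rule ccontr)
  assume "M \<noteq> {\<alpha>}"
  then obtain m where m: "m \<in> M" "m \<noteq> \<alpha>" using \<alpha> by blast
  have \<alpha>M: "\<alpha> \<in> M" using \<alpha> by blast
  have W: "X \<subseteq> V - {s1, c1}" using X_sub s1_c1_outside by blast
  have M_at: "in_ext_at X a \<alpha>" if "a \<in> M" "a \<noteq> \<alpha>" for a
    using is_modD[OF M \<alpha>M that(1)] is_mod_subset[OF M] \<alpha> that W unfolding in_ext_at_def by blast
  have mR: "m \<in> V - X" "m \<noteq> s1" "m \<noteq> c1" using M_at[OF m] is_mod_subset[OF M] m(1)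
    unfolding in_ext_at_def by auto
  have "nbrs m \<subseteq> {s1, c1}"
  proof
    fix q assume "q \<in> nbrs m"
    then have q: "prime_pair X m q" unfolding nbrs_def by blast
    show "q \<in> {s1, c1}"
    proof (rule ccontr)
      assume "q \<notin> {s1, c1}"
      then have qW: "q \<in> V - {s1, c1}" "q \<notin> X" using prime_pair_outside[OF q] by auto
      show False
      proof (cases "q \<in> M")
        case True
        then have "same_kind X m q" using M_at m qW \<alpha> unfolding same_kind_def by blast
        then show False using prime_pair_not_same_kind[OF q] by blast
      next
        case False
        then have "keeps_kind X q m" using is_modD[OF M \<alpha>M m(1) qW(1)] M_at[OF m]
          unfolding keeps_kind_def by blast
        then show False using prime_pair_not_keeps_kind[OF prime_pair_sym[OF q]] by blast
      qed
    qed
  qed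
  then show False using nbrs_not_within_pair mR by blast
qed

lemma mod_superset_trivial:
  assumes M: "is_mod (V - {s1, c1}) M" and XM: "X \<subseteq> M"
  shows "M = V - {s1, c1}"
proof (rule ccontr)
  assume "M \<noteq> V - {s1, c1}"
  then obtain y where y: "y \<in> V - {s1, c1}" "y \<notin> M" using is_mod_subset[OF M] by blast
  then have yR: "y \<in> V - X" "y \<noteq> s1" "y \<noteq> c1" using XM by auto
  have y_ext: "in_ext X y" unfolding in_ext_def using is_modD[OF M _ _ y] XM yR by blast
  have "nbrs y \<subseteq> {s1, c1}"
  proof
    fix q assume "q \<in> nbrs y"
    then have q: "prime_pair X y q" unfolding nbrs_def by blast
    show "q \<in> {s1, c1}"
    proof (rule ccontr)
      assume "q \<notin> {s1, c1}"
      then have qW: "q \<in> V - {s1, c1}" "q \<in> V - X" using prime_pair_outside[OF q] by auto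
      show False
      proof (cases "q \<in> M")
        case True
        then have "keeps_kind X q y"
          using is_modD[OF M _ _ y] XM y_ext unfolding keeps_kind_def by blast
        then show False using prime_pair_not_keeps_kind[OF prime_pair_sym[OF q]] by blast
      next
        case False
        then have "in_ext X q" unfolding in_ext_def using is_modD[OF M _ _ qW(1)] XM qW(2) by blast
        then show False using prime_pair_not_same_kind[OF q] y_ext unfolding same_kind_def by blast
      qed
    qed
  qed
  then show False using nbrs_not_within_pair yR by blast
qed

lemma prime_minus_min_pair: "prime_set (V - {s1, c1})"
proof (rule prime_setI)
  have "X \<subseteq> V - {s1, c1}" using X_sub s1_c1_outside by blast
  then show "large (V - {s1, c1})" using large_mono[OF X_large] by blast
next
  fix M assume M: "is_mod (V - {s1, c1}) M"
  have "X \<subseteq> V - {s1, c1}" using X_sub s1_c1_outside by blast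
  from prime_set_mod_cases[OF prime_X this M] show "M = {} \<or> M = V - {s1, c1} \<or> (\<exists>x. M = {x})"
  proof cases
    case 1
    then show ?thesis using mod_disjoint_trivial[OF M 1] by blast
  next
    case 2
    then show ?thesis using mod_superset_trivial[OF M] by blast
  next
    case (3 \<alpha>)
    then show ?thesis using mod_single_trivial[OF M 3] by blast
  qed
qed

end

theorem exists_prime_minus_pair:
  "\<exists>v w. v \<in> V - X \<and> w \<in> V - X \<and> v \<noteq> w \<and> prime_set (V - {v, w})"
proof -
  obtain s1 where s1: "s1 \<in> S0" "\<And>t. t \<in> S0 \<Longrightarrow> nbrs s1 \<subseteq> nbrs t" using S0_min_nbrs by blast
  have s1R: "s1 \<in> V - X" using s1(1) unfolding S0_def by blast
  obtain c1 where c1: "prime_pair X s1 c1" using has_nbr[OF s1R] by blast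
  have nbrs_c1: "nbrs c1 = S0" using nbrs_of_nbr_of_min[OF s1 c1] .
  have "nbrs s1 = {c1}"
  proof (intro equalityI subsetI)
    fix c assume "c \<in> nbrs s1"
    then have c: "prime_pair X s1 c" unfolding nbrs_def by blast
    have "nbrs c = nbrs c1" using nbrs_of_nbr_of_min[OF s1 c] nbrs_c1 by simp
    then show "c \<in> {c1}" using nbrs_inj prime_pair_outside c c1 by blast
  qed (use c1 in \<open>simp add: nbrs_def\<close>)
  then show ?thesis
    using prime_minus_min_pair[OF s1(1) _ nbrs_c1] s1R prime_pair_outside[OF c1] by blast
qed

end

lemma verts_induced [simp]: "verts (induced \<sigma> W) = W"
  unfolding induced_def verts_def by simp

context two_struct
begin

lemma verts_eqv_pair [simp]: "verts (V, E) = V" "eqv (V, E) = E"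
  unfolding verts_def eqv_def by simp_all

lemma induced_all: "induced (V, E) V = (V, E)"
  using equiv_type[OF equiv_E] unfolding induced_def by auto

lemma is_module_induced_iff:
  assumes W: "W \<subseteq> V"
  shows "is_module (induced (V, E) W) M \<longleftrightarrow> is_mod W M"
proof -
  have "((x, v), (y, v)) \<in> E \<inter> dpairs W \<times> dpairs W \<and> ((v, x), (v, y)) \<in> E \<inter> dpairs W \<times> dpairs W
      \<longleftrightarrow> \<not> separates v x y" if "x \<in> M" "y \<in> M" "v \<in> W - M" "M \<subseteq> W" for x y v
    using not_separates_iff[of x y v] that W unfolding dpairs_def by auto
  then show ?thesis
    unfolding is_module_def is_mod_def induced_def verts_def eqv_def by auto
qed

lemma prime_ts_induced_iff: "W \<subseteq> V \<Longrightarrow> prime_ts (induced (V, E) W) \<longleftrightarrow> prime_set W"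
  unfolding prime_ts_def prime_set_def large_def trivial_module_def
  by (simp add: is_module_induced_iff)

lemma class_swap_eq:
  assumes "\<not> separates x s a" "\<not> separates x s b" "\<not> separates a x b" "\<not> separates b x a"
  shows "E `` {(s, x)} = E `` {(x, s)}"
proof -
  have "E `` {(s, x)} = E `` {(a, x)}" using assms(1) unfolding separates_def by simp
  also have "\<dots> = E `` {(a, b)}" using assms(3) unfolding separates_def by simp
  also have "\<dots> = E `` {(x, b)}" using assms(4) unfolding separates_def by simp
  also have "\<dots> = E `` {(x, s)}" using assms(2) unfolding separates_def by simp
  finally show ?thesis .
qed

lemma classes_eqI:
  assumes "e \<in> classes (V, E)" "f \<in> classes (V, E)" "p \<in> e" "q \<in> f"
    and "p \<in> dpairs V" "q \<in> dpairs V" "E `` {p} = E `` {q}"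
  shows "e = f"
  using assms quotient_eqI[OF equiv_E] eq_equiv_class_iff[OF equiv_E] unfolding classes_def
  by (metis verts_eqv_pair)

end

context prime_sub
begin

text \<open>A vertex s of q^a sits in \<langle>X\<rangle> or in some X(\<alpha>); any two vertices that X does not tell apart
  from s and keep each other's kind would put (s, \<alpha>) and (\<alpha>, s) into one class.\<close>

lemma ext_set_ef_no_mutual_keeps:
  assumes X_sub: "X \<subseteq> V" and s: "s \<in> ext_set_ef (V, E) X e f"
    and ef: "e \<in> classes (V, E)" "f \<in> classes (V, E)" "e \<noteq> f"
    and ab: "a \<in> V - X" "b \<in> V - X" "indist X s a" "indist X s b"
      "keeps_kind X a b" "keeps_kind X b a"
  shows False
proof -
  have sR: "s \<in> V - X" and s_mod: "is_module (induced (V, E) (X \<union> {s})) X"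
    and s_cls: "\<forall>\<alpha>\<in>X. (s, \<alpha>) \<in> e \<and> (\<alpha>, s) \<in> f"
    using s unfolding ext_set_ef_def ext_set_def by auto
  have "X \<union> {s} \<subseteq> V" using X_sub sR by blast
  then have "is_mod (X \<union> {s}) X" using s_mod is_module_induced_iff by blast
  then have "in_ext X s" unfolding in_ext_def using sR is_modD[of "X \<union> {s}" X _ _ s] by blast
  then have "in_ext X a" "in_ext X b" using in_ext_indist ab by blast+
  obtain x where x: "x \<in> X" using large_third[OF X_large] by blast
  have "\<not> separates x s a" "\<not> separates x s b" using ab(3,4) x unfolding indist_def by blast+
  moreover have "\<not> separates a x b" "\<not> separates b x a"
    using keeps_kind_in_ext ab(5,6) \<open>in_ext X a\<close> \<open>in_ext X b\<close> x not_separates_sym by blast+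
  ultimately have "E `` {(s, x)} = E `` {(x, s)}" by (rule class_swap_eq)
  moreover have "(s, x) \<in> dpairs V" "(x, s) \<in> dpairs V" using sR x X_sub unfolding dpairs_def by auto
  ultimately have "e = f" using classes_eqI[OF ef(1,2)] s_cls x by blast
  then show False using ef(3) by simp
qed

lemma ext_alpha_ef_no_mutual_keeps:
  assumes X_sub: "X \<subseteq> V" and \<alpha>: "\<alpha> \<in> X" and s: "s \<in> ext_alpha_ef (V, E) X \<alpha> e f"
    and ef: "e \<in> classes (V, E)" "f \<in> classes (V, E)" "e \<noteq> f"
    and ab: "a \<in> V - X" "b \<in> V - X" "indist X s a" "indist X s b"
      "keeps_kind X a b" "keeps_kind X b a"
  shows False
proof -
  have sR: "s \<in> V - X" and s_mod: "is_module (induced (V, E) (X \<union> {s})) {\<alpha>, s}"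
    and s_cls: "(s, \<alpha>) \<in> e" "(\<alpha>, s) \<in> f"
    using s unfolding ext_alpha_ef_def ext_alpha_def by auto
  have "X \<union> {s} \<subseteq> V" using X_sub sR by blast
  then have s_mod': "is_mod (X \<union> {s}) {\<alpha>, s}" using s_mod is_module_induced_iff by blast
  have "in_ext_at X s \<alpha>" unfolding in_ext_at_def
  proof (intro conjI ballI)
    fix x assume "x \<in> X - {\<alpha>}"
    then show "\<not> separates x \<alpha> s" using is_modD[OF s_mod', of \<alpha> s x] sR by blast
  qed (use sR \<alpha> in auto)
  then have "in_ext_at X a \<alpha>" "in_ext_at X b \<alpha>" using in_ext_at_indist ab by blast+
  then have "\<not> separates a \<alpha> b" "\<not> separates b \<alpha> a"
    using keeps_kind_in_ext_at ab(5,6) by blast+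
  moreover have "\<not> separates \<alpha> s a" "\<not> separates \<alpha> s b" using ab(3,4) \<alpha> unfolding indist_def by blast+
  ultimately have "E `` {(s, \<alpha>)} = E `` {(\<alpha>, s)}" using class_swap_eq by blast
  moreover have "(s, \<alpha>) \<in> dpairs V" "(\<alpha>, s) \<in> dpairs V" using sR \<alpha> X_sub unfolding dpairs_def by auto
  ultimately have "e = f" using classes_eqI[OF ef(1,2) s_cls] by blast
  then show False using ef(3) by simp
qed

lemma qa_asym_vertex:
  assumes X_sub: "X \<subseteq> V" and qa: "qa (V, E) X \<noteq> {}"
  obtains s where "s \<in> V - X"
    "\<And>a b. \<lbrakk>a \<in> V - X; b \<in> V - X; indist X s a; indist X s b;
      keeps_kind X a b; keeps_kind X b a\<rbrakk> \<Longrightarrow> False"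
proof -
  obtain S e f where S: "S \<noteq> {}" "e \<in> classes (V, E)" "f \<in> classes (V, E)" "e \<noteq> f"
    "S = ext_set_ef (V, E) X e f \<or> (\<exists>\<alpha>\<in>X. S = ext_alpha_ef (V, E) X \<alpha> e f)"
    using qa unfolding qa_def by blast
  obtain s where s: "s \<in> S" using S(1) by blast
  have "s \<in> V - X"
    using S(5) s unfolding ext_set_ef_def ext_alpha_ef_def ext_set_def ext_alpha_def by auto
  then show thesis
    using that S(5) s ext_set_ef_no_mutual_keeps[OF X_sub _ S(2-4)]
      ext_alpha_ef_no_mutual_keeps[OF X_sub _ _ S(2-4)] by blast
qed

theorem exists_prime_minus_pair_if_qa:
  assumes X_sub: "X \<subseteq> V" and prime_V: "prime_set V" and qa: "qa (V, E) X \<noteq> {}"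
    and fin: "finite (V - X)" and card: "4 \<le> card (V - X)"
  shows "\<exists>v w. v \<in> V - X \<and> w \<in> V - X \<and> v \<noteq> w \<and> prime_set (V - {v, w})"
proof (cases "even (card (V - X))")
  case True
  then show ?thesis using prime_minus_pair_via_core[OF prime_V _ X_sub prime_X fin] card by simp
next
  case odd: False
  show ?thesis
  proof (cases "\<exists>u. prime_ext X u")
    case True
    then obtain u where u: "u \<in> V - X" "prime_set (X \<union> {u})" unfolding prime_ext_def by blast
    have "V - (X \<union> {u}) = (V - X) - {u}" by blast
    then have "card (V - (X \<union> {u})) = card (V - X) - 1" using u fin by simp
    moreover have "even (card (V - X) - 1)" "2 \<le> card (V - X) - 1" using odd card by presburger+
    ultimately show ?thesis
      using prime_minus_pair_via_core[OF prime_V _ _ u(2) fin] u X_sub by auto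
  next
    case no_single: False
    show ?thesis
    proof (cases "\<exists>p q z. p \<in> V - X \<and> q \<in> V - X \<and> z \<in> V - X \<and> p \<noteq> q \<and> p \<noteq> z \<and> q \<noteq> z
        \<and> prime_set (X \<union> {p, q, z})")
      case True
      then obtain p q z where pqz: "p \<in> V - X" "q \<in> V - X" "z \<in> V - X" "p \<noteq> q" "p \<noteq> z" "q \<noteq> z"
        "prime_set (X \<union> {p, q, z})" by blast
      have "V - (X \<union> {p, q, z}) = (V - X) - {p, q, z}" by blast
      then have "card (V - (X \<union> {p, q, z})) = card (V - X) - 3"
        using pqz fin by (simp add: card_Diff_subset)
      moreover have "even (card (V - X) - 3)" "2 \<le> card (V - X) - 3" using odd card by presburger+
      ultimately show ?thesis
        using prime_minus_pair_via_core[OF prime_V _ _ pqz(7) fin] pqz X_sub by auto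
    next
      case no_triple: False
      obtain s0 where "s0 \<in> V - X"
        "\<And>a b. \<lbrakk>a \<in> V - X; b \<in> V - X; indist X s0 a; indist X s0 b;
          keeps_kind X a b; keeps_kind X b a\<rbrakk> \<Longrightarrow> False"
        using qa_asym_vertex[OF X_sub qa] by blast
      then interpret pair_ext_only V E X s0
        using X_sub prime_V fin no_single no_triple by unfold_locales blast+
      show ?thesis using exists_prime_minus_pair .
    qed
  qed
qed

end

theorem theoremB1:
  fixes \<sigma> :: "'a two_structure" and X :: "'a set"
  assumes "is_two_structure \<sigma>"
    and "prime_ts \<sigma>"
    and "X \<subset> verts \<sigma>"
    and "prime_ts (induced \<sigma> X)"
    and "qa \<sigma> X \<noteq> {}"
    and "finite (verts \<sigma> - X)"
    and "4 \<le> card (verts \<sigma> - X)"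
  shows "\<exists>v w. v \<in> verts \<sigma> - X \<and> w \<in> verts \<sigma> - X \<and> v \<noteq> w \<and>
           prime_ts (remove \<sigma> {v, w})"
proof -
  obtain V E where \<sigma>: "\<sigma> = (V, E)" by fastforce
  interpret two_struct V E
    using assms(1) unfolding \<sigma> is_two_structure_def verts_def eqv_def by unfold_locales simp
  have X_sub: "X \<subseteq> V" using assms(3) unfolding \<sigma> by simp
  interpret prime_sub V E X
    using assms(4) prime_ts_induced_iff[OF X_sub] unfolding \<sigma> by unfold_locales simp
  have "prime_set V" using assms(2) prime_ts_induced_iff[of V] induced_all unfolding \<sigma> by simp
  then obtain v w where "v \<in> V - X" "w \<in> V - X" "v \<noteq> w" "prime_set (V - {v, w})"
    using exists_prime_minus_pair_if_qa[OF X_sub] assms(5-7) unfolding \<sigma> by auto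
  then show ?thesis
    using prime_ts_induced_iff[of "V - {v, w}"] unfolding \<sigma> remove_def by auto
qed

end
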